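(* Consider the many-server system described in the context under any load balancing policy for which the state process is an irreducible finite CTMC, and let $S$ be its stationary state. Let $\Delta=\frac{\log N}{\sqrt N}$, $\eta=\lambda+k\Delta$, $h(x)=\max\{x-\eta,0\}$ and $g'(x)=-\frac{\max\{x-\eta,0\}}{\Delta}$. Let $D_1=\sum_{m=1}^M w_m S_{1,m}$. Then $$\mathbb E\left[h\left(\sum_{i=1}^b S_i\right)\right]\leq J_1+\frac{5\mu_{\max}+\lambda}{\sqrt N\log N},$$ where $$J_1=\mathbb E\left[g'\left(\sum_{i=1}^bS_i\right)\bigl(\lambda A_b(S)-\lambda-\Delta+D_1\bigr)\mathbb I\Bigl\{\sum_{i=1}^bS_i>\eta+\tfrac1N\Bigr\}\right].$$
   Context: System: $N\ge2$ identical servers, each able to hold at most $b$ jobs ($b\ge1$ finite), FIFO; a job routed to a server holding $b$ jobs is discarded. Poisson arrivals of rate $\lambda N$, $\lambda=1-N^{-\alpha}$, $0<\alpha<1/2$. Service times i.i.d. Coxian with $M$ phases: phase $m$ exponential with rate $\mu_m>0$; after phase $m<M$ the job enters phase $m+1$ with probability $p_m\in[0,1)$, otherwise departs; after phase $M$ it departs. $v_m=\prod_{i=1}^{m-1}p_i/\mu_m$ with $\sum_mv_m=1$; $\bar v=\min_mv_m$. $S_{i,m}$ = fraction of servers with at least $i$ jobs whose job in service is in phase $m$, $S_i=\sum_mS_{i,m}$; the policy routes arrivals based on the current state. $A_b(s)$ = probability an incoming job is routed to a server with at least $b$ jobs given state $s$. Constants: $w_m=(1-p_m)\mu_m$ for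 $m<M$, $w_M=\mu_M$; $w_u=\max_mw_m$, $w_l=\min_mw_m$, $\mu_{\max}=\max_m\mu_m$; for $2\le m\le M$, $a_m=\frac{\mu_m}{p_1\mu_1+\mu_m}$, $b_m=(1-a_m)(1+\sum_{r=m+1}^M\frac{v_r}{v_1})-\frac{a_mv_m}{v_1}$; $\xi=\sum_{m=2}^Mb_m\prod_{j=m+1}^Ma_j$ (asserted $0<\xi<1$), $C=\sqrt{\frac{2\bar v^2\log(1/\xi)}{3M+(3M+4)\log(1/\xi)}}$, $\theta_m=\frac{6\mu_1v_m+5(m-1)v_m}{C}$, $\zeta=\frac{4w_ub}{w_l}\bigl[(\frac1{w_l}-\frac1{w_u})\sum_m\theta_mw_m+\frac1{w_l}+6\bigr]$, $k=\frac{\sum_m\theta_mw_m}{w_u}+(1+\frac{w_l}{4w_ub})\zeta-\sum_m\theta_m$. *)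

theory Defs
  imports "HOL-Analysis.Analysis"
begin

text \<open>System state: server j (j < N) is described by a pair (queue length, phase of the job
in service). Phases are 1..M; an empty server carries phase 0. Servers j >= N are (0,0).\<close>

type_synonym sys_state = "nat \<Rightarrow> nat \<times> nat"

definition valid_state :: "nat \<Rightarrow> nat \<Rightarrow> nat \<Rightarrow> sys_state \<Rightarrow> bool" where
  "valid_state N b M s \<longleftrightarrow>
     (\<forall>j. (j < N \<longrightarrow> fst (s j) \<le> b
                    \<and> (fst (s j) = 0 \<longrightarrow> snd (s j) = 0)
                    \<and> (1 \<le> fst (s j) \<longrightarrow> 1 \<le> snd (s j) \<and> snd (s j) \<le> M))
        \<and> (N \<le> j \<longrightarrow> s j = (0, 0)))"

definition states :: "nat \<Rightarrow> nat \<Rightarrow> nat \<Rightarrow> sys_state set" where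
  "states N b M = {s. valid_state N b M s}"

definition arr_next :: "nat \<Rightarrow> sys_state \<Rightarrow> nat \<Rightarrow> sys_state" where
  "arr_next b s j = (if fst (s j) < b
     then s(j := (fst (s j) + 1, if fst (s j) = 0 then 1 else snd (s j))) else s)"

definition phase_next :: "sys_state \<Rightarrow> nat \<Rightarrow> sys_state" where
  "phase_next s j = s(j := (fst (s j), snd (s j) + 1))"

definition dep_next :: "sys_state \<Rightarrow> nat \<Rightarrow> sys_state" where
  "dep_next s j = s(j := (fst (s j) - 1, if 2 \<le> fst (s j) then 1 else 0))"

text \<open>Continuation probability, with the convention that after phase M the job departs.\<close>
definition pc :: "nat \<Rightarrow> (nat \<Rightarrow> real) \<Rightarrow> nat \<Rightarrow> real" where
  "pc M p m = (if m < M then p m else 0)"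

text \<open>Transition rate from s to s' of the CTMC (self-loops included; they cancel in the
balance equations). Arrivals have total rate lam*N and are routed to server j with
probability r s j.\<close>
definition trans_rate :: "nat \<Rightarrow> nat \<Rightarrow> nat \<Rightarrow> real \<Rightarrow> (nat \<Rightarrow> real) \<Rightarrow> (nat \<Rightarrow> real)
     \<Rightarrow> (sys_state \<Rightarrow> nat \<Rightarrow> real) \<Rightarrow> sys_state \<Rightarrow> sys_state \<Rightarrow> real" where
  "trans_rate N b M lam mu p r s s' =
     (\<Sum>j<N. lam * real N * r s j * (if arr_next b s j = s' then 1 else 0)
        + (if 1 \<le> fst (s j) then
             mu (snd (s j)) * pc M p (snd (s j)) * (if phase_next s j = s' then 1 else 0)
           + mu (snd (s j)) * (1 - pc M p (snd (s j))) * (if dep_next s j = s' then 1 else 0)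
           else 0))"

definition routing_policy :: "nat \<Rightarrow> nat \<Rightarrow> nat \<Rightarrow> (sys_state \<Rightarrow> nat \<Rightarrow> real) \<Rightarrow> bool" where
  "routing_policy N b M r \<longleftrightarrow>
     (\<forall>s \<in> states N b M. (\<forall>j<N. 0 \<le> r s j) \<and> (\<Sum>j<N. r s j) = 1)"

definition irreducible_ctmc :: "sys_state set \<Rightarrow> (sys_state \<Rightarrow> sys_state \<Rightarrow> real) \<Rightarrow> bool" where
  "irreducible_ctmc X q \<longleftrightarrow>
     finite X \<and> (\<forall>s\<in>X. \<forall>t\<in>X. (s, t) \<in> {(x, y). x \<in> X \<and> y \<in> X \<and> x \<noteq> y \<and> 0 < q x y}\<^sup>*)"

definition stationary_dist :: "sys_state set \<Rightarrow> (sys_state \<Rightarrow> sys_state \<Rightarrow> real)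
     \<Rightarrow> (sys_state \<Rightarrow> real) \<Rightarrow> bool" where
  "stationary_dist X q pd \<longleftrightarrow>
     (\<forall>s\<in>X. 0 \<le> pd s) \<and> (\<Sum>s\<in>X. pd s) = 1 \<and>
     (\<forall>t\<in>X. (\<Sum>s\<in>X. pd s * q s t) = pd t * (\<Sum>u\<in>X. q t u))"

definition S_im :: "nat \<Rightarrow> sys_state \<Rightarrow> nat \<Rightarrow> nat \<Rightarrow> real" where
  "S_im N s i m = real (card {j. j < N \<and> i \<le> fst (s j) \<and> snd (s j) = m}) / real N"

definition S_i :: "nat \<Rightarrow> nat \<Rightarrow> sys_state \<Rightarrow> nat \<Rightarrow> real" where
  "S_i N M s i = (\<Sum>m=1..M. S_im N s i m)"

definition S_tot :: "nat \<Rightarrow> nat \<Rightarrow> nat \<Rightarrow> sys_state \<Rightarrow> real" where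
  "S_tot N b M s = (\<Sum>i=1..b. S_i N M s i)"

definition A_b :: "nat \<Rightarrow> nat \<Rightarrow> (sys_state \<Rightarrow> nat \<Rightarrow> real) \<Rightarrow> sys_state \<Rightarrow> real" where
  "A_b N b r s = (\<Sum>j\<in>{j. j < N \<and> b \<le> fst (s j)}. r s j)"

definition vv :: "(nat \<Rightarrow> real) \<Rightarrow> (nat \<Rightarrow> real) \<Rightarrow> nat \<Rightarrow> real" where
  "vv mu p m = (\<Prod>i\<in>{1..<m}. p i) / mu m"

definition vbar :: "nat \<Rightarrow> (nat \<Rightarrow> real) \<Rightarrow> (nat \<Rightarrow> real) \<Rightarrow> real" where
  "vbar M mu p = Min (vv mu p ` {1..M})"

definition ww :: "nat \<Rightarrow> (nat \<Rightarrow> real) \<Rightarrow> (nat \<Rightarrow> real) \<Rightarrow> nat \<Rightarrow> real" where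
  "ww M mu p m = (if m < M then (1 - p m) * mu m else mu m)"

definition w_u :: "nat \<Rightarrow> (nat \<Rightarrow> real) \<Rightarrow> (nat \<Rightarrow> real) \<Rightarrow> real" where
  "w_u M mu p = Max (ww M mu p ` {1..M})"

definition w_l :: "nat \<Rightarrow> (nat \<Rightarrow> real) \<Rightarrow> (nat \<Rightarrow> real) \<Rightarrow> real" where
  "w_l M mu p = Min (ww M mu p ` {1..M})"

definition mu_max :: "nat \<Rightarrow> (nat \<Rightarrow> real) \<Rightarrow> real" where
  "mu_max M mu = Max (mu ` {1..M})"

definition aa :: "(nat \<Rightarrow> real) \<Rightarrow> (nat \<Rightarrow> real) \<Rightarrow> nat \<Rightarrow> real" where
  "aa mu p m = mu m / (p 1 * mu 1 + mu m)"

definition bb :: "nat \<Rightarrow> (nat \<Rightarrow> real) \<Rightarrow> (nat \<Rightarrow> real) \<Rightarrow> nat \<Rightarrow> real" where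
  "bb M mu p m = (1 - aa mu p m) * (1 + (\<Sum>r=m+1..M. vv mu p r / vv mu p 1))
                 - aa mu p m * vv mu p m / vv mu p 1"

definition xi :: "nat \<Rightarrow> (nat \<Rightarrow> real) \<Rightarrow> (nat \<Rightarrow> real) \<Rightarrow> real" where
  "xi M mu p = (\<Sum>m=2..M. bb M mu p m * (\<Prod>j=m+1..M. aa mu p j))"

definition CC :: "nat \<Rightarrow> (nat \<Rightarrow> real) \<Rightarrow> (nat \<Rightarrow> real) \<Rightarrow> real" where
  "CC M mu p = sqrt (2 * (vbar M mu p)\<^sup>2 * ln (1 / xi M mu p)
                 / (3 * real M + (3 * real M + 4) * ln (1 / xi M mu p)))"

definition theta :: "nat \<Rightarrow> (nat \<Rightarrow> real) \<Rightarrow> (nat \<Rightarrow> real) \<Rightarrow> nat \<Rightarrow> real" where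
  "theta M mu p m = (6 * mu 1 * vv mu p m + 5 * (real m - 1) * vv mu p m) / CC M mu p"

definition zeta :: "nat \<Rightarrow> nat \<Rightarrow> (nat \<Rightarrow> real) \<Rightarrow> (nat \<Rightarrow> real) \<Rightarrow> real" where
  "zeta b M mu p = 4 * w_u M mu p * real b / w_l M mu p *
     ((1 / w_l M mu p - 1 / w_u M mu p) * (\<Sum>m=1..M. theta M mu p m * ww M mu p m)
      + 1 / w_l M mu p + 6)"

definition kk :: "nat \<Rightarrow> nat \<Rightarrow> (nat \<Rightarrow> real) \<Rightarrow> (nat \<Rightarrow> real) \<Rightarrow> real" where
  "kk b M mu p = (\<Sum>m=1..M. theta M mu p m * ww M mu p m) / w_u M mu p
     + (1 + w_l M mu p / (4 * w_u M mu p * real b)) * zeta b M mu p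
     - (\<Sum>m=1..M. theta M mu p m)"

end

theory Submission
  imports Defs
begin

(* Let S be the number of jobs per server and phi(x) = h(x)^2 / 2, so that phi' = h is
   1-Lipschitz. An accepted arrival (total rate lam N (1 - A_b)) raises S by 1/N and a
   departure (total rate N D_1) lowers it by 1/N, hence the generator satisfies
     G phi(S) <= h(S) (lam (1 - A_b) - D_1) + (lam + mu_max) / (2N).
   As E[G phi(S)] = 0 in stationarity, E[h(S) (lam (1 - A_b) - D_1)] >= -(lam + mu_max) / (2N).
   Now g'(S) (lam A_b - lam - Delta + D_1) = h(S) + h(S) (lam (1 - A_b) - D_1) / Delta, and the
   indicator in J_1 only discards states with h(S) <= 1/N; so E[h(S)] - J_1 is at most
   1/N + 3 (lam + mu_max) / (2 N Delta), which is the stated error for Delta = log N / sqrt N. *)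

definition generator :: "sys_state set \<Rightarrow> (sys_state \<Rightarrow> sys_state \<Rightarrow> real)
    \<Rightarrow> (sys_state \<Rightarrow> real) \<Rightarrow> sys_state \<Rightarrow> real" where
  "generator X q F s = (\<Sum>t\<in>X. q s t * (F t - F s))"

definition departure_rate ::
    "nat \<Rightarrow> nat \<Rightarrow> (nat \<Rightarrow> real) \<Rightarrow> (nat \<Rightarrow> real) \<Rightarrow> sys_state \<Rightarrow> real" where
  "departure_rate N M mu p s = (\<Sum>m=1..M. ww M mu p m * S_im N s 1 m)"

lemma real_card_filter_lessThan:
  fixes N :: nat
  shows "real (card {j. j < N \<and> P j}) = (\<Sum>j<N. if P j then 1 else 0)"
proof -
  have "(\<Sum>j<N. if P j then 1 else 0) = (\<Sum>j\<in>{j \<in> {..<N}. P j}. 1::real)"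
    by (rule sum.inter_filter[symmetric]) simp
  also have "{j \<in> {..<N}. P j} = {j. j < N \<and> P j}" by blast
  finally show ?thesis by simp
qed

lemma sum_lessThan_fun_upd:
  fixes f :: "'a \<Rightarrow> 'b::ab_group_add" and N :: nat
  assumes j: "j < N"
  shows "(\<Sum>k<N. f ((s(j := x)) k)) = (\<Sum>k<N. f (s k)) - f (s j) + f x"
proof -
  have "(\<Sum>k<N. f ((s(j := x)) k)) = f x + (\<Sum>k\<in>{..<N} - {j}. f ((s(j := x)) k))"
    using j sum.remove[of "{..<N}" j "\<lambda>k. f ((s(j := x)) k)"] by simp
  also have "(\<Sum>k\<in>{..<N} - {j}. f ((s(j := x)) k)) = (\<Sum>k\<in>{..<N} - {j}. f (s k))"
    by (rule sum.cong) auto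
  also have "\<dots> = (\<Sum>k<N. f (s k)) - f (s j)"
    using j sum.remove[of "{..<N}" j "\<lambda>k. f (s k)"] by simp
  finally show ?thesis by (simp add: algebra_simps)
qed

lemma sum_indicator_mult:
  fixes g :: "'a \<Rightarrow> real"
  assumes "finite X"
  shows "(\<Sum>t\<in>X. c * (if u = t then 1 else 0) * g t) = (if u \<in> X then c * g u else 0)"
  using assms by (simp add: if_distrib[of "\<lambda>x. _ * x"] if_distrib[of "\<lambda>x. x * _"] cong: if_cong)

lemma one_minus_powr_neg_bounds:
  fixes x \<alpha> :: real
  assumes "1 \<le> x" "0 \<le> \<alpha>"
  shows "0 \<le> 1 - x powr - \<alpha>" "1 - x powr - \<alpha> \<le> 1"
  using assms ge_one_powr_ge_zero[of x \<alpha>] by (auto simp: powr_minus_divide)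

lemma pos_part_sq_step_le:
  fixes x d \<eta> :: real
  shows "(max (x + d - \<eta>) 0)\<^sup>2 / 2 - (max (x - \<eta>) 0)\<^sup>2 / 2 \<le> max (x - \<eta>) 0 * d + d\<^sup>2 / 2"
proof -
  have "(max (x + d - \<eta>) 0)\<^sup>2 \<le> (max (x - \<eta>) 0 + d)\<^sup>2"
    by (cases "\<eta> \<le> x"; cases "\<eta> \<le> x + d") (auto intro: power_mono)
  then show ?thesis by (simp add: power2_sum)
qed

lemma pos_part_le_stein_term:
  fixes x \<eta> \<Delta> \<delta> Q K :: real
  assumes "0 < \<Delta>" "0 \<le> \<delta>" "Q \<le> K" "0 \<le> K"
  defines "H \<equiv> max (x - \<eta>) 0"
  shows "H \<le> - H / \<Delta> * (- Q - \<Delta>) * (if x > \<eta> + \<delta> then 1 else 0) + (\<delta> + \<delta> * K / \<Delta>) - H * Q / \<Delta>"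
proof (cases "x > \<eta> + \<delta>")
  case True
  then show ?thesis using assms by (simp add: field_simps)
next
  case False
  then have "0 \<le> H" "H \<le> \<delta>" using assms(2) by (auto simp: H_def)
  then have "H * Q \<le> \<delta> * K" using assms(3,4) by (meson mult_left_mono mult_right_mono order_trans)
  then have "H * Q / \<Delta> \<le> \<delta> * K / \<Delta>" using assms(1) by (simp add: divide_right_mono)
  then show ?thesis using False \<open>H \<le> \<delta>\<close> by simp
qed

lemma stationary_expectation_generator_eq_0:
  assumes "stationary_dist X q pd"
  shows "(\<Sum>s\<in>X. pd s * generator X q F s) = 0"
proof -
  have balance: "\<forall>t\<in>X. (\<Sum>s\<in>X. pd s * q s t) = pd t * (\<Sum>u\<in>X. q t u)"
    using assms by (simp add: stationary_dist_def)
  have "(\<Sum>s\<in>X. pd s * (\<Sum>t\<in>X. q s t * F t)) = (\<Sum>s\<in>X. \<Sum>t\<in>X. pd s * q s t * F t)"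
    by (simp add: sum_distrib_left mult.assoc)
  also have "\<dots> = (\<Sum>t\<in>X. (\<Sum>s\<in>X. pd s * q s t) * F t)"
    by (subst sum.swap) (simp add: sum_distrib_right)
  also have "\<dots> = (\<Sum>t\<in>X. pd t * (\<Sum>u\<in>X. q t u) * F t)"
    using balance by simp
  also have "\<dots> = (\<Sum>s\<in>X. pd s * (\<Sum>t\<in>X. q s t * F s))"
    by (simp add: sum_distrib_left sum_distrib_right mult_ac)
  finally show ?thesis
    by (simp add: generator_def right_diff_distrib sum_subtractf)
qed

lemma statesD:
  assumes "s \<in> states N b M" "j < N"
  shows "fst (s j) \<le> b"
    and "1 \<le> fst (s j) \<Longrightarrow> 1 \<le> snd (s j)" and "1 \<le> fst (s j) \<Longrightarrow> snd (s j) \<le> M"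
  using assms by (auto simp: states_def valid_state_def)

lemma arr_next_in_states:
  "s \<in> states N b M \<Longrightarrow> j < N \<Longrightarrow> 1 \<le> M \<Longrightarrow> arr_next b s j \<in> states N b M"
  unfolding states_def valid_state_def arr_next_def by auto

lemma dep_next_in_states:
  "s \<in> states N b M \<Longrightarrow> j < N \<Longrightarrow> 1 \<le> M \<Longrightarrow> 1 \<le> fst (s j) \<Longrightarrow> dep_next s j \<in> states N b M"
  unfolding states_def valid_state_def dep_next_def by auto

lemma sum_phases_indicator:
  assumes "s \<in> states N b M" "j < N" "1 \<le> i"
  shows "(\<Sum>m=1..M. if i \<le> fst (s j) \<and> snd (s j) = m then f m else 0)
    = (if i \<le> fst (s j) then f (snd (s j)) else 0)"
proof (cases "i \<le> fst (s j)")
  case True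
  then have "snd (s j) \<in> {1..M}" using statesD[OF assms(1,2)] assms(3) by auto
  with True show ?thesis by simp
qed simp

lemma S_im_eq_sum:
  "S_im N s i m = (\<Sum>j<N. if i \<le> fst (s j) \<and> snd (s j) = m then 1 else 0) / real N"
  unfolding S_im_def real_card_filter_lessThan ..

lemma S_tot_eq_mean_queue_length:
  assumes s: "s \<in> states N b M"
  shows "S_tot N b M s = (\<Sum>j<N. real (fst (s j))) / real N"
proof -
  have server: "(\<Sum>i=1..b. \<Sum>m=1..M. if i \<le> fst (s j) \<and> snd (s j) = m then 1 else 0)
      = real (fst (s j))" if j: "j < N" for j
  proof -
    have "(\<Sum>i=1..b. \<Sum>m=1..M. if i \<le> fst (s j) \<and> snd (s j) = m then 1 else 0)
        = (\<Sum>i\<in>{1..b}. if i \<le> fst (s j) then 1 else (0::real))"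
      using sum_phases_indicator[OF s j, where f = "\<lambda>_. 1::real"] by (intro sum.cong) auto
    also have "\<dots> = real (card {i \<in> {1..b}. i \<le> fst (s j)})"
      by (simp add: sum.inter_filter[symmetric])
    also have "{i \<in> {1..b}. i \<le> fst (s j)} = {1..fst (s j)}" using statesD(1)[OF s j] by auto
    finally show ?thesis by simp
  qed
  have "S_tot N b M s
      = (\<Sum>i=1..b. \<Sum>m=1..M. \<Sum>j<N. if i \<le> fst (s j) \<and> snd (s j) = m then 1 else 0) / real N"
    unfolding S_tot_def S_i_def S_im_eq_sum by (simp only: sum_divide_distrib)
  also have "\<dots>
      = (\<Sum>j<N. \<Sum>i=1..b. \<Sum>m=1..M. if i \<le> fst (s j) \<and> snd (s j) = m then 1 else 0) / real N"
    by (rule arg_cong[where f = "\<lambda>x. x / real N"], rule trans[OF sum.cong[OF refl sum.swap] sum.swap])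
  also have "\<dots> = (\<Sum>j<N. real (fst (s j))) / real N"
    using server by (intro arg_cong[where f = "\<lambda>x. x / real N"] sum.cong) auto
  finally show ?thesis .
qed

lemma departure_rate_eq:
  assumes s: "s \<in> states N b M"
  shows "departure_rate N M mu p s
    = (\<Sum>j<N. if 1 \<le> fst (s j) then ww M mu p (snd (s j)) else 0) / real N"
proof -
  have "departure_rate N M mu p s
      = (\<Sum>m=1..M. \<Sum>j<N. if 1 \<le> fst (s j) \<and> snd (s j) = m then ww M mu p m else 0) / real N"
    unfolding departure_rate_def S_im_eq_sum
    by (simp add: sum_divide_distrib sum_distrib_left if_distrib[of "\<lambda>x. _ * x"] cong: if_cong)
  also have "\<dots> = (\<Sum>j<N. \<Sum>m=1..M. if 1 \<le> fst (s j) \<and> snd (s j) = m then ww M mu p m else 0) / real N"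
    by (subst sum.swap) (rule refl)
  also have "\<dots> = (\<Sum>j<N. if 1 \<le> fst (s j) then ww M mu p (snd (s j)) else 0) / real N"
    using sum_phases_indicator[OF s _ order_refl, where f = "ww M mu p"]
    by (intro arg_cong[where f = "\<lambda>x. x / real N"] sum.cong) simp_all
  finally show ?thesis .
qed

lemma one_minus_A_b_eq:
  assumes "s \<in> states N b M" "routing_policy N b M r"
  shows "1 - A_b N b r s = (\<Sum>j<N. if fst (s j) < b then r s j else 0)"
proof -
  have "A_b N b r s = (\<Sum>j<N. if b \<le> fst (s j) then r s j else 0)"
    unfolding A_b_def by (simp add: sum.inter_filter[symmetric] conj_commute lessThan_def)
  moreover have "(\<Sum>j<N. r s j) = 1" using assms by (simp add: routing_policy_def)
  moreover have "(\<Sum>j<N. r s j)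
      = (\<Sum>j<N. (if b \<le> fst (s j) then r s j else 0) + (if fst (s j) < b then r s j else 0))"
    by (intro sum.cong) auto
  ultimately show ?thesis by (simp add: sum.distrib)
qed

lemma A_b_bounds:
  assumes "s \<in> states N b M" "routing_policy N b M r"
  shows "0 \<le> A_b N b r s" "A_b N b r s \<le> 1"
proof -
  have "\<forall>j<N. 0 \<le> r s j" using assms by (simp add: routing_policy_def)
  then have "0 \<le> (\<Sum>j\<in>{j. j < N \<and> b \<le> fst (s j)}. r s j)"
    and "0 \<le> (\<Sum>j<N. if fst (s j) < b then r s j else 0)"
    by (auto intro: sum_nonneg)
  then show "0 \<le> A_b N b r s" "A_b N b r s \<le> 1"
    using one_minus_A_b_eq[OF assms] unfolding A_b_def by linarith+
qed

lemma S_tot_arr_next: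
  assumes "s \<in> states N b M" "j < N" "1 \<le> M"
  shows "S_tot N b M (arr_next b s j) = S_tot N b M s + (if fst (s j) < b then 1 / real N else 0)"
  unfolding S_tot_eq_mean_queue_length[OF arr_next_in_states[OF assms]]
    S_tot_eq_mean_queue_length[OF assms(1)]
  using sum_lessThan_fun_upd[OF assms(2), of "\<lambda>x. real (fst x)" s]
  by (simp add: arr_next_def add_divide_distrib)

lemma S_tot_dep_next:
  assumes "s \<in> states N b M" "j < N" "1 \<le> M" "1 \<le> fst (s j)"
  shows "S_tot N b M (dep_next s j) = S_tot N b M s - 1 / real N"
  unfolding S_tot_eq_mean_queue_length[OF dep_next_in_states[OF assms]]
    S_tot_eq_mean_queue_length[OF assms(1)]
  using assms(4) sum_lessThan_fun_upd[OF assms(2), of "\<lambda>x. real (fst x)" s]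
  by (simp add: dep_next_def of_nat_diff diff_divide_distrib)

lemma S_tot_phase_next:
  assumes "s \<in> states N b M" "j < N" "phase_next s j \<in> states N b M"
  shows "S_tot N b M (phase_next s j) = S_tot N b M s"
  unfolding S_tot_eq_mean_queue_length[OF assms(3)] S_tot_eq_mean_queue_length[OF assms(1)]
  using sum_lessThan_fun_upd[OF assms(2), of "\<lambda>x. real (fst x)" s]
  by (simp add: phase_next_def)

lemma ww_eq_exit_rate: "ww M mu p m = mu m * (1 - pc M p m)"
  unfolding ww_def pc_def by simp

lemma generator_trans_rate:
  assumes fin: "finite X"
    and arr: "\<And>j. j < N \<Longrightarrow> arr_next b s j \<in> X"
    and dep: "\<And>j. j < N \<Longrightarrow> 1 \<le> fst (s j) \<Longrightarrow> dep_next s j \<in> X"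
    and phase: "\<And>j. j < N \<Longrightarrow> phase_next s j \<in> X \<Longrightarrow> F (phase_next s j) = F s"
  shows "generator X (trans_rate N b M lam mu p r) F s
    = (\<Sum>j<N. lam * real N * r s j * (F (arr_next b s j) - F s)
        + (if 1 \<le> fst (s j) then ww M mu p (snd (s j)) * (F (dep_next s j) - F s) else 0))"
proof -
  have server: "(\<Sum>t\<in>X. (lam * real N * r s j * (if arr_next b s j = t then 1 else 0)
        + (if 1 \<le> fst (s j) then
             mu (snd (s j)) * pc M p (snd (s j)) * (if phase_next s j = t then 1 else 0)
           + mu (snd (s j)) * (1 - pc M p (snd (s j))) * (if dep_next s j = t then 1 else 0)
           else 0)) * (F t - F s))
    = lam * real N * r s j * (F (arr_next b s j) - F s)
        + (if 1 \<le> fst (s j) then ww M mu p (snd (s j)) * (F (dep_next s j) - F s) else 0)"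
    if j: "j < N" for j
    using arr[OF j] dep[OF j] phase[OF j]
    by (cases "1 \<le> fst (s j)")
      (simp_all add: distrib_right sum.distrib sum_indicator_mult[OF fin] ww_eq_exit_rate)
  show ?thesis
    unfolding generator_def trans_rate_def sum_distrib_right
    by (subst sum.swap, rule sum.cong[OF refl], rule server) simp
qed

lemma mu_le_mu_max: "m \<in> {1..M} \<Longrightarrow> mu m \<le> mu_max M mu"
  unfolding mu_max_def by (intro Max_ge) auto

lemma mu_max_ge_1:
  assumes M: "1 \<le> M" and mu_pos: "\<forall>m\<in>{1..M}. 0 < mu m"
    and p_range: "\<forall>m\<in>{1..<M}. 0 \<le> p m \<and> p m < 1" and v_sum: "(\<Sum>m=1..M. vv mu p m) = 1"
  shows "1 \<le> mu_max M mu"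
proof -
  have "0 \<le> vv mu p m" if "m \<in> {1..M}" for m
    using that mu_pos p_range unfolding vv_def by (intro divide_nonneg_pos prod_nonneg) auto
  then have "vv mu p 1 \<le> 1" unfolding v_sum[symmetric] using M by (intro member_le_sum) auto
  then have "1 \<le> mu 1" using mu_pos M by (simp add: vv_def)
  then show ?thesis using M mu_le_mu_max[of 1 M mu] by simp
qed

lemma error_term_le:
  fixes N :: nat and lam \<mu> :: real
  assumes N: "2 \<le> N" and lam: "lam \<le> 1" and \<mu>: "1 \<le> \<mu>"
  defines "\<Delta> \<equiv> ln (real N) / sqrt (real N)"
  shows "1 / real N + 3 * (lam + \<mu>) / (2 * real N * \<Delta>) \<le> (5 * \<mu> + lam) / (sqrt (real N) * ln (real N))"
proof -
  define T where "T = sqrt (real N) * ln (real N)"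
  have T: "0 < T" using N by (simp add: T_def)
  have N_eq: "real N = sqrt (real N) * sqrt (real N)" by simp
  have "ln (real N) = 2 * ln (sqrt (real N))" using N by (simp add: ln_sqrt)
  also have "\<dots> \<le> 2 * sqrt (real N)" using N ln_le_minus_one[of "sqrt (real N)"] by simp
  finally have "\<Delta> \<le> 2" using N by (simp add: \<Delta>_def divide_le_eq)
  have "1 / real N + 3 * (lam + \<mu>) / (2 * real N * \<Delta>) = (\<Delta> + 3 * (lam + \<mu>) / 2) / T"
    using N by (subst (1 2) N_eq) (simp add: \<Delta>_def T_def field_simps)
  also have "\<dots> \<le> (5 * \<mu> + lam) / T"
  proof -
    have "\<Delta> + 3 * (lam + \<mu>) / 2 \<le> 5 * \<mu> + lam" using \<open>\<Delta> \<le> 2\<close> lam \<mu> by (simp add: field_simps)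
    then show ?thesis using T by (simp add: divide_right_mono)
  qed
  finally show ?thesis unfolding T_def .
qed

locale load_balancing =
  fixes N b M :: nat and lam :: real and mu p :: "nat \<Rightarrow> real" and r :: "sys_state \<Rightarrow> nat \<Rightarrow> real"
  assumes N_pos: "0 < N" and M_pos: "1 \<le> M" and lam_nonneg: "0 \<le> lam"
    and mu_pos: "\<forall>m\<in>{1..M}. 0 < mu m" and p_range: "\<forall>m\<in>{1..<M}. 0 \<le> p m \<and> p m < 1"
    and policy: "routing_policy N b M r" and finite_states: "finite (states N b M)"
begin

lemma mu_max_pos: "0 < mu_max M mu"
proof -
  have "0 < mu 1" using mu_pos M_pos by simp
  then show ?thesis using M_pos mu_le_mu_max[of 1 M mu] by simp
qed

lemma ww_bounds:
  assumes "m \<in> {1..M}"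
  shows "0 \<le> ww M mu p m" "ww M mu p m \<le> mu m"
proof -
  have "0 < mu m" using assms mu_pos by blast
  moreover have "m < M \<Longrightarrow> 0 \<le> p m \<and> p m < 1" using assms p_range by auto
  ultimately show "0 \<le> ww M mu p m" "ww M mu p m \<le> mu m"
    by (auto simp: ww_def mult_le_cancel_right1)
qed

lemma departure_rate_bounds:
  assumes s: "s \<in> states N b M"
  shows "0 \<le> departure_rate N M mu p s" "departure_rate N M mu p s \<le> mu_max M mu"
proof -
  have server: "0 \<le> (if 1 \<le> fst (s j) then ww M mu p (snd (s j)) else 0)
      \<and> (if 1 \<le> fst (s j) then ww M mu p (snd (s j)) else 0) \<le> mu_max M mu" if "j < N" for j
    using statesD[OF s that] ww_bounds[of "snd (s j)"] mu_le_mu_max[of "snd (s j)" M mu] mu_max_pos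
    by auto
  then have "0 \<le> (\<Sum>j<N. if 1 \<le> fst (s j) then ww M mu p (snd (s j)) else 0)"
    and "(\<Sum>j<N. if 1 \<le> fst (s j) then ww M mu p (snd (s j)) else 0) \<le> real N * mu_max M mu"
    using sum_mono[of "{..<N}" _ "\<lambda>_. mu_max M mu"] by (auto intro: sum_nonneg)
  then show "0 \<le> departure_rate N M mu p s" "departure_rate N M mu p s \<le> mu_max M mu"
    using N_pos by (simp_all add: departure_rate_eq[OF s] divide_le_eq mult.commute)
qed

lemma accepted_arrival_rate_le: "s \<in> states N b M \<Longrightarrow> lam * (1 - A_b N b r s) \<le> lam"
  using A_b_bounds[OF _ policy, of s] lam_nonneg by (simp add: mult_left_le)

lemma generator_fun_S_tot:
  fixes f :: "real \<Rightarrow> real"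
  assumes s: "s \<in> states N b M"
  defines "x \<equiv> S_tot N b M s"
  shows "generator (states N b M) (trans_rate N b M lam mu p r) (\<lambda>t. f (S_tot N b M t)) s
    = lam * real N * (1 - A_b N b r s) * (f (x + 1 / real N) - f x)
      + real N * departure_rate N M mu p s * (f (x - 1 / real N) - f x)"
proof -
  have "generator (states N b M) (trans_rate N b M lam mu p r) (\<lambda>t. f (S_tot N b M t)) s
    = (\<Sum>j<N. lam * real N * r s j * (f (S_tot N b M (arr_next b s j)) - f x)
        + (if 1 \<le> fst (s j) then ww M mu p (snd (s j)) * (f (S_tot N b M (dep_next s j)) - f x) else 0))"
    unfolding x_def
    by (rule generator_trans_rate) (simp_all add: finite_states arr_next_in_states[OF s _ M_pos]
        dep_next_in_states[OF s _ M_pos] S_tot_phase_next[OF s])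
  also have "\<dots> = (\<Sum>j<N. lam * real N * (f (x + 1 / real N) - f x) * (if fst (s j) < b then r s j else 0)
        + (f (x - 1 / real N) - f x) * (if 1 \<le> fst (s j) then ww M mu p (snd (s j)) else 0))"
    unfolding x_def
    by (intro sum.cong) (auto simp: S_tot_arr_next[OF s _ M_pos] S_tot_dep_next[OF s _ M_pos])
  also have "\<dots> = lam * real N * (f (x + 1 / real N) - f x) * (\<Sum>j<N. if fst (s j) < b then r s j else 0)
      + (f (x - 1 / real N) - f x) * (\<Sum>j<N. if 1 \<le> fst (s j) then ww M mu p (snd (s j)) else 0)"
    by (simp add: sum.distrib sum_distrib_left)
  finally show ?thesis
    unfolding one_minus_A_b_eq[OF s policy] departure_rate_eq[OF s] using N_pos by simp
qed

lemma generator_pos_part_sq_le: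
  fixes \<eta> :: real
  assumes s: "s \<in> states N b M"
  defines "H \<equiv> max (S_tot N b M s - \<eta>) 0"
  shows "generator (states N b M) (trans_rate N b M lam mu p r)
      (\<lambda>t. (max (S_tot N b M t - \<eta>) 0)\<^sup>2 / 2) s
    \<le> H * (lam * (1 - A_b N b r s) - departure_rate N M mu p s) + (lam + mu_max M mu) / (2 * real N)"
proof -
  define x \<delta> where "x = S_tot N b M s" and "\<delta> = 1 / real N"
  define arrivals departures
    where "arrivals = lam * real N * (1 - A_b N b r s)" and "departures = real N * departure_rate N M mu p s"
  have A: "0 \<le> A_b N b r s" "A_b N b r s \<le> 1" using A_b_bounds[OF s policy] by auto
  have D: "0 \<le> departure_rate N M mu p s" "departure_rate N M mu p s \<le> mu_max M mu"
    using departure_rate_bounds[OF s] by auto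
  have arrival_step: "(max (x + \<delta> - \<eta>) 0)\<^sup>2 / 2 - (max (x - \<eta>) 0)\<^sup>2 / 2 \<le> H * \<delta> + \<delta>\<^sup>2 / 2"
    unfolding H_def x_def by (rule pos_part_sq_step_le)
  have departure_step: "(max (x - \<delta> - \<eta>) 0)\<^sup>2 / 2 - (max (x - \<eta>) 0)\<^sup>2 / 2 \<le> H * - \<delta> + \<delta>\<^sup>2 / 2"
    unfolding H_def x_def using pos_part_sq_step_le[of _ "- \<delta>"] by simp
  have "generator (states N b M) (trans_rate N b M lam mu p r)
      (\<lambda>t. (max (S_tot N b M t - \<eta>) 0)\<^sup>2 / 2) s
    = arrivals * ((max (x + \<delta> - \<eta>) 0)\<^sup>2 / 2 - (max (x - \<eta>) 0)\<^sup>2 / 2)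
      + departures * ((max (x - \<delta> - \<eta>) 0)\<^sup>2 / 2 - (max (x - \<eta>) 0)\<^sup>2 / 2)"
    unfolding arrivals_def departures_def x_def \<delta>_def
    by (rule generator_fun_S_tot[OF s, where f = "\<lambda>y. (max (y - \<eta>) 0)\<^sup>2 / 2"])
  also have "\<dots> \<le> arrivals * (H * \<delta> + \<delta>\<^sup>2 / 2) + departures * (H * - \<delta> + \<delta>\<^sup>2 / 2)"
    using lam_nonneg A D N_pos arrival_step departure_step
    by (intro add_mono mult_left_mono) (auto simp: arrivals_def departures_def)
  also have "\<dots> = H * (lam * (1 - A_b N b r s) - departure_rate N M mu p s)
      + (lam * (1 - A_b N b r s) + departure_rate N M mu p s) / (2 * real N)"
    using N_pos by (simp add: arrivals_def departures_def \<delta>_def field_simps power2_eq_square)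
  also have "\<dots> \<le> H * (lam * (1 - A_b N b r s) - departure_rate N M mu p s) + (lam + mu_max M mu) / (2 * real N)"
    using accepted_arrival_rate_le[OF s] D by (intro add_left_mono divide_right_mono) auto
  finally show ?thesis .
qed

lemma expected_excess_times_net_inflow_ge:
  fixes \<eta> :: real
  assumes stat: "stationary_dist (states N b M) (trans_rate N b M lam mu p r) pd"
  shows "- ((lam + mu_max M mu) / (2 * real N))
    \<le> (\<Sum>s\<in>states N b M. pd s * (max (S_tot N b M s - \<eta>) 0
          * (lam * (1 - A_b N b r s) - departure_rate N M mu p s)))"
proof -
  have pd: "\<forall>s\<in>states N b M. 0 \<le> pd s" "(\<Sum>s\<in>states N b M. pd s) = 1"
    using stat by (auto simp: stationary_dist_def)
  have "0 = (\<Sum>s\<in>states N b M. pd s * generator (states N b M) (trans_rate N b M lam mu p r)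
      (\<lambda>t. (max (S_tot N b M t - \<eta>) 0)\<^sup>2 / 2) s)"
    using stationary_expectation_generator_eq_0[OF stat] by simp
  also have "\<dots> \<le> (\<Sum>s\<in>states N b M. pd s * (max (S_tot N b M s - \<eta>) 0
          * (lam * (1 - A_b N b r s) - departure_rate N M mu p s)
        + (lam + mu_max M mu) / (2 * real N)))"
    using pd(1) generator_pos_part_sq_le by (intro sum_mono mult_left_mono) auto
  also have "\<dots> = (\<Sum>s\<in>states N b M. pd s * (max (S_tot N b M s - \<eta>) 0
          * (lam * (1 - A_b N b r s) - departure_rate N M mu p s)))
        + (lam + mu_max M mu) / (2 * real N)"
    by (simp only: distrib_left sum.distrib sum_distrib_right[symmetric] pd(2) mult_1_left)
  finally show ?thesis by linarith
qed

lemma expected_excess_le: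
  fixes \<eta> \<Delta> :: real
  assumes stat: "stationary_dist (states N b M) (trans_rate N b M lam mu p r) pd" and \<Delta>: "0 < \<Delta>"
  shows "(\<Sum>s\<in>states N b M. pd s * max (S_tot N b M s - \<eta>) 0)
    \<le> (\<Sum>s\<in>states N b M. pd s *
          (- max (S_tot N b M s - \<eta>) 0 / \<Delta> * (lam * A_b N b r s - lam - \<Delta> + departure_rate N M mu p s)
           * (if S_tot N b M s > \<eta> + 1 / real N then 1 else 0)))
      + (1 / real N + 3 * (lam + mu_max M mu) / (2 * real N * \<Delta>))"
proof -
  define X K c where "X = states N b M" and "K = lam + mu_max M mu"
    and "c = 1 / real N + K / (real N * \<Delta>)"
  define H Q where "H s = max (S_tot N b M s - \<eta>) 0"
    and "Q s = lam * (1 - A_b N b r s) - departure_rate N M mu p s" for s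
  define J where "J s = - H s / \<Delta> * (lam * A_b N b r s - lam - \<Delta> + departure_rate N M mu p s)
      * (if S_tot N b M s > \<eta> + 1 / real N then 1 else 0)" for s
  have pd: "\<forall>s\<in>X. 0 \<le> pd s" "(\<Sum>s\<in>X. pd s) = 1"
    using stat by (auto simp: stationary_dist_def X_def)
  have K: "0 \<le> K" using lam_nonneg mu_max_pos by (simp add: K_def)
  have "H s \<le> J s + c - H s * Q s / \<Delta>" if "s \<in> X" for s
  proof -
    have s: "s \<in> states N b M" using that by (simp add: X_def)
    have "Q s \<le> K"
      using accepted_arrival_rate_le[OF s] departure_rate_bounds(1)[OF s] mu_max_pos
      unfolding Q_def K_def by linarith
    then show ?thesis
      using pos_part_le_stein_term[OF \<Delta> _ _ K, of "1 / real N" "Q s" "S_tot N b M s" \<eta>]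
      by (simp add: H_def J_def Q_def c_def algebra_simps)
  qed
  then have "(\<Sum>s\<in>X. pd s * H s) \<le> (\<Sum>s\<in>X. pd s * (J s + c - H s * Q s / \<Delta>))"
    using pd(1) by (intro sum_mono mult_left_mono) auto
  also have "\<dots> = (\<Sum>s\<in>X. pd s * J s) + (\<Sum>s\<in>X. pd s) * c - (\<Sum>s\<in>X. pd s * (H s * Q s)) / \<Delta>"
    by (simp only: right_diff_distrib distrib_left sum.distrib sum_subtractf sum_distrib_right
        sum_divide_distrib times_divide_eq_right mult.assoc)
  also have "\<dots> \<le> (\<Sum>s\<in>X. pd s * J s) + c + K / (2 * real N) / \<Delta>"
  proof -
    have "- (K / (2 * real N) / \<Delta>) \<le> (\<Sum>s\<in>X. pd s * (H s * Q s)) / \<Delta>"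
      using expected_excess_times_net_inflow_ge[OF stat, of \<eta>] \<Delta>
      unfolding X_def H_def Q_def K_def minus_divide_left by (intro divide_right_mono) auto
    then show ?thesis
      unfolding pd(2) mult_1_left by (simp only: diff_conv_add_uminus add_le_cancel_left neg_le_iff_le)
  qed
  also have "\<dots> = (\<Sum>s\<in>X. pd s * J s) + (1 / real N + 3 * K / (2 * real N * \<Delta>))"
    by (simp add: c_def field_simps)
  finally show ?thesis by (simp add: X_def H_def J_def K_def)
qed

end

theorem lemma7:
  fixes N b M :: nat and alpha lam :: real
    and mu p :: "nat \<Rightarrow> real"
    and r :: "sys_state \<Rightarrow> nat \<Rightarrow> real"
    and pd :: "sys_state \<Rightarrow> real"
  assumes N2: "2 \<le> N" and b1: "1 \<le> b" and M1: "1 \<le> M"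
    and alpha: "0 < alpha" "alpha < 1/2"
    and lam_def: "lam = 1 - real N powr (- alpha)"
    and mu_pos: "\<forall>m\<in>{1..M}. 0 < mu m"
    and p_rng: "\<forall>m\<in>{1..<M}. 0 \<le> p m \<and> p m < 1"
    and v_sum: "(\<Sum>m=1..M. vv mu p m) = 1"
    and xi_rng: "0 < xi M mu p" "xi M mu p < 1"
    and policy: "routing_policy N b M r"
    and irred: "irreducible_ctmc (states N b M) (trans_rate N b M lam mu p r)"
    and stat: "stationary_dist (states N b M) (trans_rate N b M lam mu p r) pd"
  shows
    "let \<Delta> = ln (real N) / sqrt (real N);
         \<eta> = lam + kk b M mu p * \<Delta>;
         h = (\<lambda>x::real. max (x - \<eta>) 0);
         g' = (\<lambda>x::real. - max (x - \<eta>) 0 / \<Delta>);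
         D1 = (\<lambda>s. \<Sum>m=1..M. ww M mu p m * S_im N s 1 m);
         J1 = (\<Sum>s\<in>states N b M. pd s *
                 (g' (S_tot N b M s) * (lam * A_b N b r s - lam - \<Delta> + D1 s)
                  * (if S_tot N b M s > \<eta> + 1 / real N then 1 else 0)))
     in (\<Sum>s\<in>states N b M. pd s * h (S_tot N b M s))
          \<le> J1 + (5 * mu_max M mu + lam) / (sqrt (real N) * ln (real N))"
proof -
  have fin: "finite (states N b M)" using irred by (simp add: irreducible_ctmc_def)
  have lam: "0 \<le> lam" "lam \<le> 1"
    unfolding lam_def using N2 alpha(1) one_minus_powr_neg_bounds[of "real N" alpha] by auto
  interpret load_balancing N b M lam mu p r
    using N2 M1 lam(1) mu_pos p_rng policy fin by unfold_locales auto
  have \<Delta>: "0 < ln (real N) / sqrt (real N)" using N2 by simp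
  show ?thesis
    unfolding Let_def departure_rate_def[symmetric]
    using expected_excess_le[OF stat \<Delta>, where \<eta> = "lam + kk b M mu p * (ln (real N) / sqrt (real N))"]
      error_term_le[OF N2 lam(2) mu_max_ge_1[OF M1 mu_pos p_rng v_sum]]
    by linarith
qed

end
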